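(* Assume $\delta=d$ and $\gamma\ge1$. Then $$\frac{q(z,w)}{z^\gamma w^d}\longrightarrow1\quad\text{as } (z,w)\in W_R,\ R\to\infty$$ (i.e. as $|z|\to\infty$ and $|w|/|z|^\alpha\to\infty$ when $\alpha>-\infty$, and as $|z|\to\infty$ with $w\ne0$ when $\alpha=-\infty$), and there is $R_0>1$ such that $f(W_R)\subset W_R$ for all $R\ge R_0$.
   Context: Let $p(z)=z^d+O(z^{d-1})$ be a monic polynomial of degree $\delta=d\ge 2$, and let $q(z,w)=b(z)w^d+(\text{terms of lower degree in } w)$ be a polynomial with $\deg_w q=d$, where $b$ is a monic polynomial of degree $\gamma$. Let $f(z,w)=(p(z),q(z,w))$. Define $\alpha=\max\{(n_j-\gamma)/(d-m_j)\}$ over monomials $z^{n_j}w^{m_j}$ appearing in $q$ with nonzero coefficient and $m_j<d$, and $\alpha=-\infty$ if $q(z,w)=b(z)w^d$. Let $W_R=\{(z,w):|z|>R,\ |w|>R|z|^\alpha\}$ if $\alpha>-\infty$, and $W_R=\{(z,w):|z|>R,\ w\ne0\}$ if $\alpha=-\infty$. *)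

theory Defs
  imports "HOL-Analysis.Analysis" "HOL-Computational_Algebra.Polynomial" "HOL-Library.Extended_Real"
begin

text \<open>A polynomial q(z,w) in two complex variables is represented as a polynomial in w
whose coefficients are polynomials in z: the coefficient of the monomial z^n w^m is
coeff (coeff q m) n.\<close>

definition poly2 :: "complex poly poly \<Rightarrow> complex \<Rightarrow> complex \<Rightarrow> complex" where
  "poly2 q z w = (\<Sum>m\<le>degree q. poly (coeff q m) z * w ^ m)"

definition alpha_set :: "complex poly poly \<Rightarrow> real set" where
  "alpha_set q = {(real n - real (degree (lead_coeff q))) / (real (degree q) - real m) | n m.
                    m < degree q \<and> coeff (coeff q m) n \<noteq> 0}"

definition alpha :: "complex poly poly \<Rightarrow> ereal" where
  "alpha q = (if alpha_set q = {} then -\<infinity> else ereal (Max (alpha_set q)))"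

definition W :: "complex poly poly \<Rightarrow> real \<Rightarrow> (complex \<times> complex) set" where
  "W q R = (if alpha q = -\<infinity> then {(z, w). norm z > R \<and> w \<noteq> 0}
            else {(z, w). norm z > R \<and> norm w > R * norm z powr real_of_ereal (alpha q)})"

end

theory Submission imports Defs begin

(* Write d = deg_w q, b = lead_coeff q, gamma = deg b and
   a = real_of_ereal (alpha q).  By the definition of alpha, every monomial
   z^n w^m (m < d) of q satisfies n - gamma <= a (d - m); hence on W_R, where
   |w| > R |z|^a, it is dominated by z^gamma w^d up to a factor 1/R.  Since b is
   monic, b(z) w^d differs from z^gamma w^d by a relative error O(1/|z|) = O(1/R).
   Together this gives |q(z,w) - z^gamma w^d| <= K/R |z|^gamma |w|^d on W_R for a
   constant K depending only on q, which is the first claim.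
   For the invariance, p(z) is comparable to z^d and q(z,w) to z^gamma w^d on W_R
   for large R, so |p(z)| > R and |p(z)|^a is at most a constant times |z|^(a d),
   which is dominated by |q(z,w)|/R because |w|^d > R^d |z|^(a d) and d >= 2.
   The file first treats monic one-variable polynomials, then the monomial
   estimate coming from alpha, then the two-variable estimate for q, then the
   invariance of W_R; the theorem combines the last two steps. *)

definition tail_norm :: "'a::real_normed_field poly \<Rightarrow> real" where
  "tail_norm P = (\<Sum>n<degree P. norm (coeff P n))"

lemma tail_norm_nonneg: "tail_norm P \<ge> 0"
  unfolding tail_norm_def by (intro sum_nonneg) auto

lemma monic_bound:
  fixes P :: "'a::real_normed_field poly"
  assumes "lead_coeff P = 1" "norm z \<ge> 1"
  shows "norm (poly P z - z ^ degree P) \<le> tail_norm P * norm z ^ (degree P - 1)"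
proof -
  have "poly P z = (\<Sum>n<degree P. coeff P n * z ^ n) + z ^ degree P"
    using assms(1) by (simp add: poly_altdef lessThan_Suc_atMost[symmetric])
  then have "norm (poly P z - z ^ degree P) = norm (\<Sum>n<degree P. coeff P n * z ^ n)"
    by simp
  also have "\<dots> \<le> (\<Sum>n<degree P. norm (coeff P n) * norm z ^ n)"
    by (rule order_trans[OF norm_sum]) (simp add: norm_mult norm_power)
  also have "\<dots> \<le> (\<Sum>n<degree P. norm (coeff P n) * norm z ^ (degree P - 1))"
    by (intro sum_mono mult_left_mono power_increasing) (use assms(2) in auto)
  finally show ?thesis by (simp add: tail_norm_def sum_distrib_right)
qed

lemma monic_comparable:
  fixes P :: "'a::real_normed_field poly"
  assumes "lead_coeff P = 1" "degree P \<ge> 1" "norm z \<ge> 1" "2 * tail_norm P \<le> norm z"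
  shows "norm z ^ degree P / 2 \<le> norm (poly P z)" "norm (poly P z) \<le> 2 * norm z ^ degree P"
proof -
  let ?k = "degree P"
  have split: "norm z ^ ?k = norm z ^ (?k - 1) * norm z"
    using assms(2) by (cases "degree P") (auto simp: mult.commute)
  have "tail_norm P * norm z ^ (?k - 1) \<le> norm z / 2 * norm z ^ (?k - 1)"
    by (rule mult_right_mono) (use assms(4) in auto)
  then have err: "norm (poly P z - z ^ ?k) \<le> norm z ^ ?k / 2"
    using monic_bound[OF assms(1,3)] split by (simp add: mult.commute)
  have zk: "norm (z ^ ?k) = norm z ^ ?k" "0 \<le> norm z ^ ?k" by (simp_all add: norm_power)
  have "norm (z ^ ?k) \<le> norm (poly P z) + norm (poly P z - z ^ ?k)"
    by (metis norm_minus_commute norm_triangle_sub)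
  then show "norm z ^ ?k / 2 \<le> norm (poly P z)" using err zk by linarith
  have "norm (poly P z) \<le> norm (z ^ ?k) + norm (poly P z - z ^ ?k)"
    by (metis add.commute diff_add_cancel norm_triangle_ineq)
  then show "norm (poly P z) \<le> 2 * norm z ^ ?k" using err zk by linarith
qed

lemma powr_comparable:
  fixes x y a :: real
  assumes "x > 0" "x / 2 \<le> y" "y \<le> 2 * x"
  shows "y powr a \<le> 2 powr \<bar>a\<bar> * x powr a"
proof (cases "a \<ge> 0")
  case True
  have "y powr a \<le> (2 * x) powr a"
    using assms True by (intro powr_mono2) auto
  also have "\<dots> \<le> 2 powr \<bar>a\<bar> * x powr a"
    using True by (simp add: powr_mult)
  finally show ?thesis .
next
  case False
  have "y powr a \<le> (x / 2) powr a"
    using assms False by (intro powr_mono2') auto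
  also have "\<dots> = x powr a / 2 powr a"
    using assms(1) by (simp add: powr_divide)
  also have "\<dots> = 2 powr \<bar>a\<bar> * x powr a"
    using False by (simp add: powr_minus divide_inverse)
  finally show ?thesis .
qed

text \<open>The defining inequality of W_R turns the exponent bound of a monomial into
  domination by the leading monomial x^g y^d, with a factor R to spare.\<close>

lemma monomial_dominated:
  fixes x y R a :: real and n m g d :: nat
  assumes "R \<ge> 1" "x > R" "y > R * x powr a" "m < d"
    and "real n - real g \<le> a * (real d - real m)"
  shows "R * x ^ n * y ^ m \<le> x ^ g * y ^ d"
proof -
  have x: "x > 0" "x \<ge> 1" using assms(1,2) by auto
  have "0 \<le> R * x powr a" using assms(1) by simp
  then have y: "y \<ge> 0" using assms(3) by linarith
  have "y ^ (d - m) \<ge> (R * x powr a) ^ (d - m)"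
    by (rule power_mono) (use assms(1,3) in auto)
  also have "(R * x powr a) ^ (d - m) = R ^ (d - m) * x powr (a * real (d - m))"
    using x by (simp add: power_mult_distrib powr_power mult.commute)
  also have "\<dots> \<ge> R * x powr (real n - real g)"
  proof (rule mult_mono)
    show "R \<le> R ^ (d - m)"
      using assms(1,4) by (metis One_nat_def Suc_leI power_increasing power_one_right zero_less_diff)
    show "x powr (real n - real g) \<le> x powr (a * real (d - m))"
      using assms(4,5) x by (intro powr_mono) auto
  qed (use assms(1) in auto)
  finally have gap: "R * x powr (real n - real g) \<le> y ^ (d - m)" .
  have "R * x ^ n * y ^ m = y ^ m * (x ^ g * (R * x powr (real n - real g)))"
    using x by (simp add: powr_realpow[symmetric] powr_add[symmetric] algebra_simps)
  also have "\<dots> \<le> y ^ m * (x ^ g * y ^ (d - m))"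
    using gap x y by (intro mult_left_mono) auto
  also have "\<dots> = x ^ g * y ^ d"
    using assms(4) by (simp add: power_add[symmetric] algebra_simps)
  finally show ?thesis .
qed

lemma alpha_set_finite: "finite (alpha_set q)"
proof -
  have "alpha_set q \<subseteq> (\<lambda>(m, n). (real n - real (degree (lead_coeff q))) / (real (degree q) - real m))
          ` (SIGMA m:{..<degree q}. {..degree (coeff q m)})"
    unfolding alpha_set_def by (force dest: le_degree)
  then show ?thesis by (rule finite_subset) auto
qed

lemma alpha_exponent_bound:
  assumes "alpha q \<noteq> -\<infinity>" "m < degree q" "coeff (coeff q m) n \<noteq> 0"
  shows "real n - real (degree (lead_coeff q)) \<le> real_of_ereal (alpha q) * (real (degree q) - real m)"
proof -
  have "(real n - real (degree (lead_coeff q))) / (real (degree q) - real m) \<in> alpha_set q"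
    using assms(2,3) unfolding alpha_set_def by blast
  then have "(real n - real (degree (lead_coeff q))) / (real (degree q) - real m)
               \<le> real_of_ereal (alpha q)"
    using assms(1) alpha_set_finite unfolding alpha_def by (auto split: if_splits)
  then show ?thesis using assms(2) by (simp add: pos_divide_le_eq)
qed

lemma alpha_minf_lower_coeffs:
  assumes "alpha q = -\<infinity>" "m < degree q"
  shows "coeff q m = 0"
proof -
  have "alpha_set q = {}" using assms(1) unfolding alpha_def by (auto split: if_splits)
  then show ?thesis using assms(2) unfolding alpha_set_def by (auto simp: poly_eq_iff)
qed

lemma W_memD:
  assumes "(z, w) \<in> W q R" "R \<ge> 1"
  shows "norm z > R" "w \<noteq> 0"
proof -
  show "norm z > R" using assms(1) unfolding W_def by (auto split: if_splits)
  have "0 \<le> R * norm z powr real_of_ereal (alpha q)" using assms(2) by simp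
  then show "w \<noteq> 0" using assms(1) unfolding W_def by (auto split: if_splits)
qed

lemma poly2_split:
  "poly2 q z w = (\<Sum>m<degree q. poly (coeff q m) z * w ^ m) + poly (lead_coeff q) z * w ^ degree q"
  unfolding poly2_def by (simp add: lessThan_Suc_atMost[symmetric])

lemma term_bound:
  fixes c :: "'a::real_normed_field poly"
  assumes "R \<ge> 0" "\<And>n. coeff c n \<noteq> 0 \<Longrightarrow> R * norm z ^ n * norm w ^ m \<le> M"
  shows "norm (poly c z * w ^ m) * R \<le> (\<Sum>n\<le>degree c. norm (coeff c n)) * M"
proof -
  have "norm (poly c z * w ^ m) * R = norm (\<Sum>n\<le>degree c. coeff c n * z ^ n * w ^ m) * R"
    by (simp add: poly_altdef sum_distrib_right)
  also have "\<dots> \<le> (\<Sum>n\<le>degree c. norm (coeff c n * z ^ n * w ^ m)) * R"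
    using assms(1) by (intro mult_right_mono norm_sum)
  also have "\<dots> = (\<Sum>n\<le>degree c. norm (coeff c n) * (R * norm z ^ n * norm w ^ m))"
    by (simp add: sum_distrib_right sum_distrib_left norm_mult norm_power algebra_simps)
  also have "\<dots> \<le> (\<Sum>n\<le>degree c. norm (coeff c n) * M)"
    by (intro sum_mono) (metis assms(2) mult_left_mono mult_zero_left norm_ge_zero norm_zero order_refl)
  finally show ?thesis by (simp add: sum_distrib_right)
qed

definition lower_norm :: "complex poly poly \<Rightarrow> real" where
  "lower_norm q = (\<Sum>m<degree q. \<Sum>n\<le>degree (coeff q m). norm (coeff (coeff q m) n))"

lemma lower_norm_nonneg: "lower_norm q \<ge> 0"
  unfolding lower_norm_def by (intro sum_nonneg) auto

lemma lower_terms_bound: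
  assumes "R \<ge> 1" "(z, w) \<in> W q R"
  shows "norm (poly2 q z w - poly (lead_coeff q) z * w ^ degree q) * R
           \<le> lower_norm q * (norm z ^ degree (lead_coeff q) * norm w ^ degree q)"
proof (cases "alpha q = -\<infinity>")
  case True
  then show ?thesis
    using poly2_split[of q z w] alpha_minf_lower_coeffs[OF True] lower_norm_nonneg[of q] by simp
next
  case False
  let ?M = "norm z ^ degree (lead_coeff q) * norm w ^ degree q"
  have zw: "norm z > R" "norm w > R * norm z powr real_of_ereal (alpha q)"
    using assms(2) False unfolding W_def by auto
  have "norm (poly2 q z w - poly (lead_coeff q) z * w ^ degree q) * R
      \<le> (\<Sum>m<degree q. norm (poly (coeff q m) z * w ^ m) * R)"
    using assms(1) poly2_split[of q z w] by (simp add: sum_distrib_right[symmetric] mult_right_mono norm_sum)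
  also have "\<dots> \<le> (\<Sum>m<degree q. (\<Sum>n\<le>degree (coeff q m). norm (coeff (coeff q m) n)) * ?M)"
    using assms(1)
    by (intro sum_mono term_bound monomial_dominated[OF assms(1) zw] alpha_exponent_bound[OF False]) auto
  finally show ?thesis by (simp add: lower_norm_def sum_distrib_right)
qed

definition approx_const :: "complex poly poly \<Rightarrow> real" where
  "approx_const q = lower_norm q + tail_norm (lead_coeff q)"

lemma poly2_near_leading:
  assumes "lead_coeff (lead_coeff q) = 1" "degree (lead_coeff q) \<ge> 1"
    and "R \<ge> 1" "(z, w) \<in> W q R"
  shows "norm (poly2 q z w - z ^ degree (lead_coeff q) * w ^ degree q) * R
           \<le> approx_const q * (norm z ^ degree (lead_coeff q) * norm w ^ degree q)"
proof -
  let ?b = "lead_coeff q" and ?g = "degree (lead_coeff q)" and ?d = "degree q"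
  have z: "norm z > R" using W_memD[OF assms(4,3)] by simp
  have "norm (poly ?b z - z ^ ?g) * R \<le> tail_norm ?b * norm z ^ (?g - 1) * norm z"
    using monic_bound[OF assms(1), of z] z assms(3) tail_norm_nonneg[of ?b]
    by (intro mult_mono) auto
  also have "\<dots> = tail_norm ?b * norm z ^ ?g"
    using assms(2) by (cases ?g) (auto simp: mult.commute)
  finally have tail_bound: "norm (poly ?b z - z ^ ?g) * R \<le> tail_norm ?b * norm z ^ ?g" .
  have "norm ((poly ?b z - z ^ ?g) * w ^ ?d) * R = norm (poly ?b z - z ^ ?g) * R * norm w ^ ?d"
    by (simp add: norm_mult norm_power mult_ac)
  also have "\<dots> \<le> tail_norm ?b * norm z ^ ?g * norm w ^ ?d"
    by (rule mult_right_mono[OF tail_bound]) simp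
  finally have leading_error:
    "norm ((poly ?b z - z ^ ?g) * w ^ ?d) * R \<le> tail_norm ?b * (norm z ^ ?g * norm w ^ ?d)"
    by (simp only: mult.assoc)
  have "norm (poly2 q z w - z ^ ?g * w ^ ?d)
      \<le> norm (poly2 q z w - poly ?b z * w ^ ?d) + norm ((poly ?b z - z ^ ?g) * w ^ ?d)"
    by (rule order_trans[OF _ norm_triangle_ineq]) (simp add: algebra_simps)
  then have "norm (poly2 q z w - z ^ ?g * w ^ ?d) * R
      \<le> (norm (poly2 q z w - poly ?b z * w ^ ?d) + norm ((poly ?b z - z ^ ?g) * w ^ ?d)) * R"
    using assms(3) by (intro mult_right_mono) auto
  also have "\<dots> = norm (poly2 q z w - poly ?b z * w ^ ?d) * R + norm ((poly ?b z - z ^ ?g) * w ^ ?d) * R"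
    by (rule distrib_right)
  also have "\<dots> \<le> lower_norm q * (norm z ^ ?g * norm w ^ ?d) + tail_norm ?b * (norm z ^ ?g * norm w ^ ?d)"
    using lower_terms_bound[OF assms(3,4)] leading_error by (rule add_mono)
  finally show ?thesis unfolding approx_const_def by (simp only: distrib_right)
qed

lemma poly2_relative_error:
  assumes "lead_coeff (lead_coeff q) = 1" "degree (lead_coeff q) \<ge> 1"
    and "R \<ge> 1" "(z, w) \<in> W q R"
  shows "norm (poly2 q z w / (z ^ degree (lead_coeff q) * w ^ degree q) - 1) \<le> approx_const q / R"
proof -
  let ?m = "z ^ degree (lead_coeff q) * w ^ degree q"
  have m: "norm ?m > 0" using W_memD[OF assms(4,3)] assms(3) by auto
  have "norm (poly2 q z w - ?m) \<le> approx_const q * norm ?m / R"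
    using poly2_near_leading[OF assms] assms(3) by (simp add: le_divide_eq norm_mult norm_power)
  then have "norm (poly2 q z w - ?m) / norm ?m \<le> approx_const q / R"
    using m by (simp add: divide_le_eq)
  moreover have "poly2 q z w / ?m - 1 = (poly2 q z w - ?m) / ?m"
    using m by (simp add: field_simps)
  ultimately show ?thesis by (simp add: norm_divide)
qed

lemma poly2_lower_bound:
  assumes "lead_coeff (lead_coeff q) = 1" "degree (lead_coeff q) \<ge> 1"
    and "R \<ge> 1" "2 * approx_const q \<le> R" "(z, w) \<in> W q R"
  shows "norm z ^ degree (lead_coeff q) * norm w ^ degree q / 2 \<le> norm (poly2 q z w)"
proof -
  let ?m = "z ^ degree (lead_coeff q) * w ^ degree q"
  have nm: "norm ?m = norm z ^ degree (lead_coeff q) * norm w ^ degree q"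
    by (simp add: norm_mult norm_power)
  have "R * norm (poly2 q z w - ?m) = norm (poly2 q z w - ?m) * R" by (rule mult.commute)
  also have "\<dots> \<le> approx_const q * norm ?m"
    using poly2_near_leading[OF assms(1-3,5)] nm by simp
  also have "\<dots> \<le> R * (norm ?m / 2)"
    using assms(4) mult_right_mono[of "2 * approx_const q" R "norm ?m"] by simp
  finally have "norm (poly2 q z w - ?m) \<le> norm ?m / 2"
    by (rule mult_left_le_imp_le) (use assms(3) in simp)
  moreover have "norm ?m \<le> norm (poly2 q z w) + norm (?m - poly2 q z w)"
    by (rule norm_triangle_sub)
  ultimately show ?thesis using nm norm_minus_commute[of ?m "poly2 q z w"] by linarith
qed

text \<open>The growth estimate behind f(W_R) in W_R: |z|^gamma |w|^d / 2 beats
  R C |z|^(a d) once |w| > R |z|^a, with t standing for |z|^a.\<close>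

lemma leading_beats_power:
  fixes x s t R C :: real and g d :: nat
  assumes "R \<ge> 1" "2 * C \<le> R" "R \<le> x" "g \<ge> 1" "d \<ge> 2" "t > 0" "s > R * t"
  shows "R * (C * t ^ d) < x ^ g * s ^ d / 2"
proof -
  have "R \<le> R ^ 2" using power_increasing[of 1 2 R] assms(1) by simp
  then have "R * (2 * C) \<le> R * R ^ 2"
    using assms(1,2) by (intro mult_left_mono) auto
  also have "\<dots> \<le> x ^ g * R ^ d"
    using assms(1,3-5) by (intro mult_mono power_increasing)
      (auto intro: order_trans[OF _ power_increasing[of 1 g x]])
  finally have "R * (2 * C) * t ^ d \<le> x ^ g * (R * t) ^ d"
    using assms(6) by (simp add: mult_right_mono algebra_simps)
  also have "\<dots> < x ^ g * s ^ d"
    using assms by (intro mult_strict_left_mono power_strict_mono) auto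
  finally show ?thesis by simp
qed

lemma W_invariant:
  assumes "lead_coeff p = 1" "degree p = degree q" "degree q \<ge> 2"
    and "lead_coeff (lead_coeff q) = 1" "degree (lead_coeff q) \<ge> 1"
    and "R \<ge> 2" "2 * tail_norm p \<le> R" "2 * approx_const q \<le> R"
    and "2 * 2 powr \<bar>real_of_ereal (alpha q)\<bar> \<le> R"
    and "(z, w) \<in> W q R"
  shows "(poly p z, poly2 q z w) \<in> W q R"
proof -
  let ?d = "degree q" and ?g = "degree (lead_coeff q)" and ?a = "real_of_ereal (alpha q)"
  have R: "R \<ge> 1" using assms(6) by simp
  have z: "norm z > R" and w: "w \<noteq> 0" using W_memD[OF assms(10) R] by auto
  have p_low: "norm z ^ ?d / 2 \<le> norm (poly p z)" and p_up: "norm (poly p z) \<le> 2 * norm z ^ ?d"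
    using monic_comparable[OF assms(1), of z] assms(2,3,7) z R by auto
  have "2 * norm z \<le> norm z ^ 2" using z assms(6) by (simp add: power2_eq_square mult_right_mono)
  also have "\<dots> \<le> norm z ^ ?d" using z R assms(3) by (intro power_increasing) auto
  finally have p_out: "norm (poly p z) > R" using p_low z by simp
  have "z \<noteq> 0" using z R by auto
  then have leading_pos: "norm z ^ ?g * norm w ^ ?d > 0" using w by simp
  have q_low: "norm z ^ ?g * norm w ^ ?d / 2 \<le> norm (poly2 q z w)"
    using poly2_lower_bound[OF assms(4,5) R assms(8,10)] .
  show ?thesis
  proof (cases "alpha q = -\<infinity>")
    case True
    then show ?thesis using p_out q_low leading_pos z unfolding W_def by auto
  next
    case False
    define t where "t = norm z powr ?a"
    have t: "t > 0" unfolding t_def using \<open>z \<noteq> 0\<close> by simp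
    have "0 < norm z ^ ?d" using \<open>z \<noteq> 0\<close> by simp
    then have "norm (poly p z) powr ?a \<le> 2 powr \<bar>?a\<bar> * (norm z ^ ?d) powr ?a"
      using p_low p_up by (rule powr_comparable)
    also have "(norm z ^ ?d) powr ?a = t ^ ?d"
      unfolding t_def using \<open>z \<noteq> 0\<close>
      by (simp add: powr_power powr_realpow[symmetric] powr_powr mult.commute)
    finally have "R * norm (poly p z) powr ?a \<le> R * (2 powr \<bar>?a\<bar> * t ^ ?d)"
      using R by (intro mult_left_mono) auto
    also have "\<dots> < norm z ^ ?g * norm w ^ ?d / 2"
      using assms(3,5,9,10) False R z t unfolding W_def t_def
      by (intro leading_beats_power) auto
    finally show ?thesis using q_low p_out False unfolding W_def by auto
  qed
qed

theorem lemma6p2: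
  fixes p :: "complex poly" and q :: "complex poly poly" and d :: nat
  defines "b \<equiv> lead_coeff q"
  defines "\<gamma> \<equiv> degree b"
  defines "f \<equiv> (\<lambda>(z, w). (poly p z, poly2 q z w))"
  assumes "d \<ge> 2"
    and "degree p = d" and "lead_coeff p = 1"
    and "degree q = d"
    and "lead_coeff b = 1"
    and "\<gamma> \<ge> 1"
  shows "(\<forall>\<epsilon>>0. \<exists>R. \<forall>(z, w)\<in>W q R. norm (poly2 q z w / (z ^ \<gamma> * w ^ d) - 1) < \<epsilon>)
         \<and> (\<exists>R0>1. \<forall>R\<ge>R0. f ` W q R \<subseteq> W q R)"
proof -
  have b: "lead_coeff (lead_coeff q) = 1" "degree (lead_coeff q) \<ge> 1"
    using assms(8,9) unfolding b_def \<gamma>_def by auto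
  have "\<exists>R. \<forall>(z, w)\<in>W q R. norm (poly2 q z w / (z ^ \<gamma> * w ^ d) - 1) < \<epsilon>"
    if "\<epsilon> > 0" for \<epsilon> :: real
  proof -
    define R where "R = max 1 (2 * approx_const q / \<epsilon>)"
    have "R \<ge> 1" "2 * approx_const q / \<epsilon> \<le> R" unfolding R_def by simp_all
    then have "approx_const q / R \<le> \<epsilon> / 2"
      using \<open>\<epsilon> > 0\<close> by (simp add: divide_le_eq field_simps)
    then have "approx_const q / R < \<epsilon>" using \<open>\<epsilon> > 0\<close> by linarith
    then show ?thesis
      using poly2_relative_error[OF b \<open>R \<ge> 1\<close>] assms(7) unfolding \<gamma>_def b_def
      by (intro exI[of _ R]) (force intro: le_less_trans)
  qed
  moreover
  define R0 where "R0 = max 2 (max (2 * tail_norm p) (max (2 * approx_const q)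
                                 (2 * 2 powr \<bar>real_of_ereal (alpha q)\<bar>)))"
  have "\<forall>R\<ge>R0. f ` W q R \<subseteq> W q R"
    using W_invariant[OF assms(6) _ _ b] assms(4,5,7) unfolding f_def R0_def by fastforce
  moreover have "R0 > 1" unfolding R0_def by simp
  ultimately show ?thesis by blast
qed

end
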